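(* Let $L=(T,V,E)$ be a link stream (as defined in the context) with $m=|E|>0$, let $\mathcal{C}$ be a dynamic community structure on $L$, let $\lfloor \mathcal{C} \rfloor=\{\lfloor C\rfloor\}_{C\in\mathcal{C}}$ be its trimmed version, and let $\omega>0$. Then $$Q_{\star}(L,\lfloor \mathcal{C}\rfloor,\omega)\ \ge\ Q_{\star}(L,\mathcal{C},\omega),$$ for $\star = JM$ and for $\star = MM$, where $Q_\star$ denotes Longitudinal Modularity as defined in the context.
   Context: A link stream is a triple $L=(T,V,E)$ where $T\subset\mathbb{R}$ is a finite (discrete) set of time instants, $V$ is a finite set of nodes, and $E\subseteq \{(uv,t): u,v\in V,\ t\in T\}$ is a finite set of instantaneous, undirected, unweighted interactions. Write $uv_t=1$ if $(uv,t)\in E$ and $0$ otherwise; for $T'\subseteq T$ put $L_{uv,T'}=\sum_{t\in T'} uv_t$, $L_{uv}=L_{uv,T}$, $k_u=\sum_{v\in V}L_{uv}$ (degree), and $m=\sum_{u\in V}k_u/2=|E|$. A time node is a pair $ut\in V\times T$. A dynamic community structure $\mathcal{C}$ is a collection of non-empty, pairwise disjoint communities, each community $C$ being a set of time nodes. For a community $C$ and node $u$: $T_{u\in C}=\{t\in T: ut\in C\}$; $T_C=\bigcup_{u\in V}T_{u\in C}$; $L_{uv\in C}=L_{uv,\,T_{u\in C}\cap T_{v\in C}}$. For a node $u$, $\eta_u(\mathcal{C})$ (community switch count) is the number of communities of $\mathcal{C}$ visited by $u$, minus one. Expectations: $\mathbb{E}_{JM}[L_{uv\in C}]=\frac{k_uk_v}{2m}\frac{|T_C|}{|T|}\mathbb{1}_{|T_{u\in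 C}||T_{v\in C}|>0}$, and $\mathbb{E}_{MM}[L_{uv\in C}]=\frac{k_uk_v}{2m}\frac{\sqrt{|T_{u\in C}||T_{v\in C}|}}{|T|}$. Longitudinal Modularity, for $\star\in\{JM,MM\}$: $$Q_\star(L,\mathcal{C},\omega)=\frac{1}{2m}\sum_{C\in\mathcal{C}}\sum_{(u,v)\in V^2}\big[L_{uv\in C}-\mathbb{E}_\star[L_{uv\in C}]\big]-\frac{\omega}{2m}\sum_{u\in V}\eta_u(\mathcal{C}).$$ Active time nodes: $A=\{ut\in V\times T:\exists v\in V,\ (uv,t)\in E\}$; $T_{u\in C\cap A}=\{t: ut\in C\cap A\}$. The trimmed existence time of $u$ in $C$ is $\lfloor T_{u\in C}\rfloor = T_{u\in C}\cap[\min T_{u\in C\cap A},\ \max T_{u\in C\cap A}]$ (the smallest subset of $T_{u\in C}$ containing all time instants between the first and last instant at which $u$ is active within $C$; empty if $u$ is never active within $C$). The trimmed existence time of $C$ is $\lfloor T_C\rfloor=\bigcup_u\lfloor T_{u\in C}\rfloor$, the trimmed community is $\lfloor C\rfloor=\bigcup_{u\in V}\{u\}\times\lfloor T_{u\in C}\rfloor$, and $\lfloor\mathcal{C}\rfloor=\{\lfloor C\rfloor\}_{C\in\mathcal{C}}$, with $Q_\star(L,\lfloor\mathcal{C}\rfloor,\omega)$ computed by the same formula. *)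

theory Defs
  imports Complex_Main
begin

text \<open>Link streams. An interaction (uv,t) is represented as the pair of the
unordered pair {u,v} (a set) and the time instant t.\<close>

definition link_stream :: "real set \<Rightarrow> 'v set \<Rightarrow> ('v set \<times> real) set \<Rightarrow> bool" where
  "link_stream T V E \<longleftrightarrow> finite T \<and> finite V \<and>
     E \<subseteq> {({u, v}, t) | u v t. u \<in> V \<and> v \<in> V \<and> t \<in> T}"

definition ind :: "('v set \<times> real) set \<Rightarrow> 'v \<Rightarrow> 'v \<Rightarrow> real \<Rightarrow> real" where
  "ind E u v t = (if ({u, v}, t) \<in> E then 1 else 0)"

definition Lw :: "('v set \<times> real) set \<Rightarrow> 'v \<Rightarrow> 'v \<Rightarrow> real set \<Rightarrow> real" where
  "Lw E u v T' = (\<Sum>t\<in>T'. ind E u v t)"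

definition deg :: "real set \<Rightarrow> 'v set \<Rightarrow> ('v set \<times> real) set \<Rightarrow> 'v \<Rightarrow> real" where
  "deg T V E u = (\<Sum>v\<in>V. Lw E u v T)"

definition mE :: "('v set \<times> real) set \<Rightarrow> real" where
  "mE E = real (card E)"

definition dyn_comm_structure :: "real set \<Rightarrow> 'v set \<Rightarrow> ('v \<times> real) set set \<Rightarrow> bool" where
  "dyn_comm_structure T V \<C> \<longleftrightarrow>
     (\<forall>C\<in>\<C>. C \<noteq> {} \<and> C \<subseteq> V \<times> T) \<and>
     (\<forall>C1\<in>\<C>. \<forall>C2\<in>\<C>. C1 \<noteq> C2 \<longrightarrow> C1 \<inter> C2 = {})"

definition T_in :: "'v \<Rightarrow> ('v \<times> real) set \<Rightarrow> real set" where
  "T_in u C = {t. (u, t) \<in> C}"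

definition T_comm :: "'v set \<Rightarrow> ('v \<times> real) set \<Rightarrow> real set" where
  "T_comm V C = (\<Union>u\<in>V. T_in u C)"

definition L_in :: "('v set \<times> real) set \<Rightarrow> 'v \<Rightarrow> 'v \<Rightarrow> ('v \<times> real) set \<Rightarrow> real" where
  "L_in E u v C = Lw E u v (T_in u C \<inter> T_in v C)"

text \<open>community switch count eta_u: number of visited communities minus one
  (truncated at 0 for a node visiting no community)\<close>
definition eta :: "('v \<times> real) set set \<Rightarrow> 'v \<Rightarrow> nat" where
  "eta \<C> u = card {C \<in> \<C>. \<exists>t. (u, t) \<in> C} - 1"

datatype null_model = JM | MM

definition expect :: "null_model \<Rightarrow> real set \<Rightarrow> 'v set \<Rightarrow> ('v set \<times> real) set
                       \<Rightarrow> 'v \<Rightarrow> 'v \<Rightarrow> ('v \<times> real) set \<Rightarrow> real" where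
  "expect M T V E u v C =
     (case M of
        JM \<Rightarrow> deg T V E u * deg T V E v / (2 * mE E) * (real (card (T_comm V C)) / real (card T))
              * (if card (T_in u C) * card (T_in v C) > 0 then 1 else 0)
      | MM \<Rightarrow> deg T V E u * deg T V E v / (2 * mE E)
              * (sqrt (real (card (T_in u C)) * real (card (T_in v C))) / real (card T)))"

definition long_mod :: "null_model \<Rightarrow> real set \<Rightarrow> 'v set \<Rightarrow> ('v set \<times> real) set
                         \<Rightarrow> ('v \<times> real) set set \<Rightarrow> real \<Rightarrow> real" where
  "long_mod M T V E \<C> \<omega> =
     1 / (2 * mE E) * (\<Sum>C\<in>\<C>. \<Sum>u\<in>V. \<Sum>v\<in>V. L_in E u v C - expect M T V E u v C)
     - \<omega> / (2 * mE E) * (\<Sum>u\<in>V. real (eta \<C> u))"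

definition active :: "real set \<Rightarrow> 'v set \<Rightarrow> ('v set \<times> real) set \<Rightarrow> ('v \<times> real) set" where
  "active T V E = {(u, t). u \<in> V \<and> t \<in> T \<and> (\<exists>v\<in>V. ({u, v}, t) \<in> E)}"

definition trim_T :: "real set \<Rightarrow> 'v set \<Rightarrow> ('v set \<times> real) set \<Rightarrow> 'v \<Rightarrow> ('v \<times> real) set \<Rightarrow> real set" where
  "trim_T T V E u C =
     (let S = T_in u (C \<inter> active T V E) in
      if S = {} then {} else T_in u C \<inter> {Min S .. Max S})"

definition trim_comm :: "real set \<Rightarrow> 'v set \<Rightarrow> ('v set \<times> real) set \<Rightarrow> ('v \<times> real) set \<Rightarrow> ('v \<times> real) set" where
  "trim_comm T V E C = (\<Union>u\<in>V. {u} \<times> trim_T T V E u C)"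

definition trim_struct :: "real set \<Rightarrow> 'v set \<Rightarrow> ('v set \<times> real) set \<Rightarrow> ('v \<times> real) set set \<Rightarrow> ('v \<times> real) set set" where
  "trim_struct T V E \<C> = trim_comm T V E ` \<C>"

end

theory Submission
  imports Defs
begin

text \<open>Trimming only removes time nodes, and it never removes a time node at which the node
  interacts with a partner inside the same community. Hence the observed interaction term
  L_{uv\<in>C} is unchanged, while every ingredient of the expected term (the existence
  times of nodes and of the community) can only shrink, so the expectation does not increase.
  Trimming also cannot make a node visit more communities, so the switch penalty does not
  increase either.\<close>

lemma T_in_trim_comm:
  "T_in u (trim_comm T V E C) = (if u \<in> V then trim_T T V E u C else {})"
  unfolding T_in_def trim_comm_def by auto

lemma trim_T_subset: "trim_T T V E u C \<subseteq> T_in u C"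
  unfolding trim_T_def Let_def by auto

lemma trim_comm_subset: "trim_comm T V E C \<subseteq> C"
  using trim_T_subset unfolding trim_comm_def T_in_def by fastforce

lemma mem_trim_T_if_interaction:
  assumes "link_stream T V E" and "u \<in> V" and "v \<in> V"
    and "t \<in> T_in u C" and "({u, v}, t) \<in> E"
  shows "t \<in> trim_T T V E u C"
proof -
  let ?S = "T_in u (C \<inter> active T V E)"
  have "t \<in> T" using assms(1,5) unfolding link_stream_def by auto
  then have t_active: "t \<in> ?S" using assms(2-5) unfolding T_in_def active_def by auto
  have "finite ?S"
    by (rule finite_subset[of _ T]) (use assms(1) in \<open>auto simp: T_in_def active_def link_stream_def\<close>)
  then have "Min ?S \<le> t" "t \<le> Max ?S" using t_active by auto
  then show ?thesis using t_active assms(4) unfolding trim_T_def Let_def by auto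
qed

lemma L_in_trim_comm:
  assumes ls: "link_stream T V E" and u: "u \<in> V" and v: "v \<in> V" and "C \<subseteq> V \<times> T"
  shows "L_in E u v (trim_comm T V E C) = L_in E u v C"
proof -
  let ?trimmed = "trim_T T V E u C \<inter> trim_T T V E v C"
  have fin: "finite (T_in u C \<inter> T_in v C)"
    by (rule finite_subset[of _ T]) (use assms in \<open>auto simp: T_in_def link_stream_def\<close>)
  have sub: "?trimmed \<subseteq> T_in u C \<inter> T_in v C"
    using trim_T_subset[of T V E u C] trim_T_subset[of T V E v C] by blast
  have no_interaction: "\<forall>t \<in> T_in u C \<inter> T_in v C - ?trimmed. ind E u v t = 0"
  proof
    fix t assume t: "t \<in> T_in u C \<inter> T_in v C - ?trimmed"
    show "ind E u v t = 0"
    proof (rule ccontr)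
      assume "ind E u v t \<noteq> 0"
      then have uv: "({u, v}, t) \<in> E" by (simp add: ind_def split: if_splits)
      then have vu: "({v, u}, t) \<in> E" by (simp add: insert_commute)
      have "t \<in> trim_T T V E u C" using mem_trim_T_if_interaction[OF ls u v _ uv] t by blast
      moreover have "t \<in> trim_T T V E v C" using mem_trim_T_if_interaction[OF ls v u _ vu] t by blast
      ultimately show False using t by blast
    qed
  qed
  show ?thesis
    unfolding L_in_def Lw_def T_in_trim_comm
    using u v sum.mono_neutral_left[OF fin sub no_interaction] by simp
qed

lemma deg_nonneg: "deg T V E u \<ge> 0"
  unfolding deg_def Lw_def ind_def by (auto intro!: sum_nonneg)

lemma card_T_in_mono:
  assumes "C' \<subseteq> C" and "finite C"
  shows "card (T_in u C') \<le> card (T_in u C)"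
proof -
  have "finite (T_in u C)"
    using finite_imageI[OF assms(2), of snd] by (rule finite_subset[rotated]) (force simp: T_in_def)
  then show ?thesis using assms(1) by (intro card_mono) (auto simp: T_in_def)
qed

lemma card_T_comm_mono:
  assumes "C' \<subseteq> C" and "finite C"
  shows "card (T_comm V C') \<le> card (T_comm V C)"
proof -
  have "finite (T_comm V C)"
    using finite_imageI[OF assms(2), of snd] by (rule finite_subset[rotated]) (force simp: T_comm_def T_in_def)
  then show ?thesis using assms(1) by (intro card_mono) (auto simp: T_comm_def T_in_def)
qed

lemma expect_mono:
  assumes "C' \<subseteq> C" and "finite C"
  shows "expect M T V E u v C' \<le> expect M T V E u v C"
proof -
  have prefactor_nonneg: "0 \<le> deg T V E u * deg T V E v / (2 * mE E)"
    using deg_nonneg[of T V E u] deg_nonneg[of T V E v] by (simp add: mE_def)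
  note card_u = card_T_in_mono[OF assms, of u] and card_v = card_T_in_mono[OF assms, of v]
  show ?thesis
  proof (cases M)
    case JM
    have frac: "real (card (T_comm V C')) / real (card T) \<le> real (card (T_comm V C)) / real (card T)"
      using card_T_comm_mono[OF assms, of V] by (simp add: divide_right_mono)
    have indicator: "(if card (T_in u C') * card (T_in v C') > 0 then 1 else 0)
        \<le> (if card (T_in u C) * card (T_in v C) > 0 then 1 else (0::real))"
      using card_u card_v by auto
    show ?thesis
      unfolding expect_def JM null_model.case
      by (rule mult_mono[OF mult_left_mono[OF frac prefactor_nonneg] indicator])
        (use prefactor_nonneg in \<open>auto simp del: times_divide_eq_right times_divide_eq_left\<close>)
  next
    case MM
    have "sqrt (real (card (T_in u C')) * real (card (T_in v C'))) / real (card T)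
        \<le> sqrt (real (card (T_in u C)) * real (card (T_in v C))) / real (card T)"
      using card_u card_v by (intro divide_right_mono real_sqrt_le_mono mult_mono) auto
    then show ?thesis
      unfolding expect_def MM null_model.case using prefactor_nonneg by (rule mult_left_mono)
  qed
qed

definition comm_score :: "null_model \<Rightarrow> real set \<Rightarrow> 'v set \<Rightarrow> ('v set \<times> real) set
                           \<Rightarrow> ('v \<times> real) set \<Rightarrow> real" where
  "comm_score M T V E C = (\<Sum>u\<in>V. \<Sum>v\<in>V. L_in E u v C - expect M T V E u v C)"

lemma comm_score_empty: "comm_score M T V E {} = 0"
  unfolding comm_score_def L_in_def Lw_def T_in_def expect_def by (cases M) simp_all

lemma comm_score_le_trim_comm:
  assumes "link_stream T V E" and "C \<subseteq> V \<times> T"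
  shows "comm_score M T V E C \<le> comm_score M T V E (trim_comm T V E C)"
proof -
  have "finite C"
    by (rule finite_subset[OF assms(2)]) (use assms(1) in \<open>simp add: link_stream_def\<close>)
  then show ?thesis
    unfolding comm_score_def
    using L_in_trim_comm[OF assms(1) _ _ assms(2)] expect_mono[OF trim_comm_subset]
    by (intro sum_mono) (simp add: algebra_simps)
qed

text \<open>Shrinking the members of a disjoint family can only merge two of them into the empty
  set, on which g vanishes.\<close>

lemma sum_image_shrinking:
  assumes "finite \<C>" and "\<And>C. C \<in> \<C> \<Longrightarrow> f C \<subseteq> C"
    and "\<And>C1 C2. C1 \<in> \<C> \<Longrightarrow> C2 \<in> \<C> \<Longrightarrow> C1 \<noteq> C2 \<Longrightarrow> C1 \<inter> C2 = {}"
    and "g {} = 0"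
  shows "sum g (f ` \<C>) = sum (g \<circ> f) \<C>"
proof (rule sum.reindex_nontrivial[OF assms(1)])
  fix C1 C2 assume C12: "C1 \<in> \<C>" "C2 \<in> \<C>" "C1 \<noteq> C2" and same: "f C1 = f C2"
  have "f C1 \<subseteq> C1 \<inter> C2"
    using assms(2)[OF C12(1)] assms(2)[OF C12(2)] same by blast
  then have "f C1 = {}" using assms(3)[OF C12] by blast
  then show "g (f C1) = 0" using assms(4) by simp
qed

lemma eta_image_shrinking_le:
  assumes "finite \<C>" and "\<And>C. C \<in> \<C> \<Longrightarrow> f C \<subseteq> C"
  shows "eta (f ` \<C>) u \<le> eta \<C> u"
proof -
  let ?visited = "{C \<in> \<C>. \<exists>t. (u, t) \<in> C}"
  have "{C \<in> f ` \<C>. \<exists>t. (u, t) \<in> C} \<subseteq> f ` ?visited"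
    using assms(2) by blast
  then have "card {C \<in> f ` \<C>. \<exists>t. (u, t) \<in> C} \<le> card (f ` ?visited)"
    using assms(1) by (intro card_mono) auto
  also have "\<dots> \<le> card ?visited"
    using assms(1) by (intro card_image_le) auto
  finally have "card {C \<in> f ` \<C>. \<exists>t. (u, t) \<in> C} \<le> card ?visited" .
  then show ?thesis unfolding eta_def by simp
qed

lemma finite_dyn_comm_structure:
  assumes "link_stream T V E" and "dyn_comm_structure T V \<C>"
  shows "finite \<C>"
  by (rule finite_subset[of _ "Pow (V \<times> T)"])
    (use assms in \<open>auto simp: link_stream_def dyn_comm_structure_def\<close>)

text \<open>No positivity of m is needed: for m = 0 both sides vanish,
  since division by zero yields zero.\<close>

lemma long_mod_le_long_mod:
  assumes "\<omega> \<ge> 0"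
    and "sum (comm_score M T V E) \<C> \<le> sum (comm_score M T V E) \<C>'"
    and "\<And>u. u \<in> V \<Longrightarrow> eta \<C>' u \<le> eta \<C> u"
  shows "long_mod M T V E \<C> \<omega> \<le> long_mod M T V E \<C>' \<omega>"
proof -
  have m: "mE E \<ge> 0" by (simp add: mE_def)
  have "(\<Sum>u\<in>V. real (eta \<C>' u)) \<le> (\<Sum>u\<in>V. real (eta \<C> u))"
    using assms(3) by (intro sum_mono) simp
  then have "\<omega> / (2 * mE E) * (\<Sum>u\<in>V. real (eta \<C>' u))
      \<le> \<omega> / (2 * mE E) * (\<Sum>u\<in>V. real (eta \<C> u))"
    using m assms(1) by (intro mult_left_mono) auto
  moreover have "1 / (2 * mE E) * sum (comm_score M T V E) \<C>
      \<le> 1 / (2 * mE E) * sum (comm_score M T V E) \<C>'"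
    using m assms(2) by (intro mult_left_mono) auto
  ultimately show ?thesis
    unfolding long_mod_def comm_score_def by linarith
qed

theorem mainTheorem1:
  fixes T :: "real set" and V :: "'v set" and E :: "('v set \<times> real) set"
    and \<C> :: "('v \<times> real) set set" and \<omega> :: real and M :: null_model
  assumes "link_stream T V E"
    and "card E > 0"
    and "dyn_comm_structure T V \<C>"
    and "\<omega> > 0"
  shows "long_mod M T V E (trim_struct T V E \<C>) \<omega> \<ge> long_mod M T V E \<C> \<omega>"
proof -
  have fin: "finite \<C>" using finite_dyn_comm_structure[OF assms(1,3)] .
  have sub: "C \<subseteq> V \<times> T" if "C \<in> \<C>" for C
    using assms(3) that unfolding dyn_comm_structure_def by auto
  have disj: "C \<inter> C' = {}" if "C \<in> \<C>" "C' \<in> \<C>" "C \<noteq> C'" for C C'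
    using assms(3) that unfolding dyn_comm_structure_def by auto
  have "sum (comm_score M T V E) \<C> \<le> sum (comm_score M T V E \<circ> trim_comm T V E) \<C>"
    using comm_score_le_trim_comm[OF assms(1) sub] by (intro sum_mono) auto
  also have "\<dots> = sum (comm_score M T V E) (trim_struct T V E \<C>)"
    unfolding trim_struct_def
    using sum_image_shrinking[where f = "trim_comm T V E" and g = "comm_score M T V E",
        OF fin trim_comm_subset disj comm_score_empty]
    by simp
  finally show ?thesis
    using assms(4) eta_image_shrinking_le[where f = "trim_comm T V E", OF fin trim_comm_subset]
    unfolding trim_struct_def by (intro long_mod_le_long_mod) auto
qed

end
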